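(* Let $(\underline{\mathbf{V}},\underline{\mathbf{P}})$ be a subsolution and $(\overline{\mathbf{V}},\overline{\mathbf{P}})$ a supersolution of the asymptotic system described in the context, both locally bounded in time, with $\underline{V}_j(0)\le\overline{V}_j(0)$ and $\underline{P}_j(0)\le\overline{P}_j(0)$ for all $j\in\mathbb{Z}$. Then $\underline{V}_j(t)\le\overline{V}_j(t)$ and $\underline{P}_j(t)\le\overline{P}_j(t)$ for all $t>0$, $j\in\mathbb{Z}$. If moreover $(\underline{\mathbf{V}}(0),\underline{\mathbf{P}}(0))\not\equiv(\overline{\mathbf{V}}(0),\overline{\mathbf{P}}(0))$, then $\underline{V}_j(t)<\overline{V}_j(t)$ and $\underline{P}_j(t)<\overline{P}_j(t)$ for all $t>0$, $j\in\mathbb{Z}$.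
   Context: Fix $\alpha,\beta>0$ and $f\in\mathscr{C}^1([0,1])$ with $f(0)=f(1)=0$, $0<f(u)\le f'(0)u$ on $(0,1)$, extended to a locally Lipschitz function on $\mathbb{R}$ negative on $\mathbb{R}\setminus[0,1]$. The asymptotic system is $V_j'=-2\alpha V_j+\beta(P_j+P_{j+1})$, $P_j'=f(P_j)+\alpha(V_j+V_{j-1})-2\beta P_j$ ($t>0$, $j\in\mathbb{Z}$). A supersolution is $(\overline{\mathbf{V}},\overline{\mathbf{P}})$ with $\overline{V}_j,\overline{P}_j\in\mathscr{C}^1([0,+\infty),\mathbb{R})$ such that for all $t>0$, $j$: $\overline{V}_j'\ge-2\alpha\overline{V}_j+\beta(\overline{P}_j+\overline{P}_{j+1})$ and $\overline{P}_j'\ge f(\overline{P}_j)+\alpha(\overline{V}_j+\overline{V}_{j-1})-2\beta\overline{P}_j$; a subsolution has both inequalities reversed. Locally bounded in time: $\sup_{t\in[0,T],j\in\mathbb{Z}}(|V_j(t)|+|P_j(t)|)<\infty$ for every $T>0$. *)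

theory Defs
  imports "HOL-Analysis.Analysis"
begin

definition KPP_reaction :: "(real \<Rightarrow> real) \<Rightarrow> bool" where
  "KPP_reaction f \<longleftrightarrow>
     (\<exists>df. (\<forall>u\<in>{0..1}. (f has_real_derivative df u) (at u within {0..1}))
        \<and> continuous_on {0..1} df
        \<and> f 0 = 0 \<and> f 1 = 0
        \<and> (\<forall>u\<in>{0<..<1}. 0 < f u \<and> f u \<le> df 0 * u))
     \<and> (\<forall>x. \<exists>U. open U \<and> x \<in> U \<and> (\<exists>L. \<forall>y\<in>U. \<forall>z\<in>U. \<bar>f y - f z\<bar> \<le> L * \<bar>y - z\<bar>))
     \<and> (\<forall>u. u \<notin> {0..1} \<longrightarrow> f u < 0)"

definition C1_halfline :: "(real \<Rightarrow> real) \<Rightarrow> (real \<Rightarrow> real) \<Rightarrow> bool" where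
  "C1_halfline u g \<longleftrightarrow>
     (\<forall>t\<ge>0. (u has_real_derivative g t) (at t within {0..})) \<and> continuous_on {0..} g"

definition is_supersolution ::
  "real \<Rightarrow> real \<Rightarrow> (real \<Rightarrow> real) \<Rightarrow> (int \<Rightarrow> real \<Rightarrow> real) \<Rightarrow> (int \<Rightarrow> real \<Rightarrow> real) \<Rightarrow> bool" where
  "is_supersolution \<alpha> \<beta> f V P \<longleftrightarrow>
     (\<exists>V' P'. (\<forall>j. C1_halfline (V j) (V' j) \<and> C1_halfline (P j) (P' j)) \<and>
       (\<forall>t>0. \<forall>j. V' j t \<ge> -2*\<alpha>*V j t + \<beta>*(P j t + P (j+1) t)
               \<and> P' j t \<ge> f (P j t) + \<alpha>*(V j t + V (j-1) t) - 2*\<beta>*P j t))"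

definition is_subsolution ::
  "real \<Rightarrow> real \<Rightarrow> (real \<Rightarrow> real) \<Rightarrow> (int \<Rightarrow> real \<Rightarrow> real) \<Rightarrow> (int \<Rightarrow> real \<Rightarrow> real) \<Rightarrow> bool" where
  "is_subsolution \<alpha> \<beta> f V P \<longleftrightarrow>
     (\<exists>V' P'. (\<forall>j. C1_halfline (V j) (V' j) \<and> C1_halfline (P j) (P' j)) \<and>
       (\<forall>t>0. \<forall>j. V' j t \<le> -2*\<alpha>*V j t + \<beta>*(P j t + P (j+1) t)
               \<and> P' j t \<le> f (P j t) + \<alpha>*(V j t + V (j-1) t) - 2*\<beta>*P j t))"

definition locally_bounded_in_time ::
  "(int \<Rightarrow> real \<Rightarrow> real) \<Rightarrow> (int \<Rightarrow> real \<Rightarrow> real) \<Rightarrow> bool" where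
  "locally_bounded_in_time V P \<longleftrightarrow>
     (\<forall>T>0. \<exists>M. \<forall>t\<in>{0..T}. \<forall>j. \<bar>V j t\<bar> + \<bar>P j t\<bar> \<le> M)"

end

theory Submission
  imports Defs
begin

text \<open>
  Write dV and dP for the gaps between supersolution and subsolution. On a bounded time
  interval both solutions stay in a compact set on which f is Lipschitz, so the gaps satisfy a
  linear cooperative system of differential inequalities: a negative gap decreases at rate at
  most K m as long as all gaps are at least -m. Hence over a time step of length 1/(2K) the
  largest negative part M of the gaps is at most M/2, i.e. zero; stepping forward in time gives
  the weak comparison. For the strong one, every gap g satisfies g' >= -K g + c with a
  nonnegative coupling term c, so exp(K t) g(t) is nondecreasing, and it becomes positive as
  soon as g(0) > 0 or c > 0. Positivity of dV j forces that of dP j and dP (j+1), which in turn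
  force that of dV (j-1) and dV (j+1); so a single positive initial gap spreads to all sites.
\<close>

lemma lipschitz_on_interval_if_locally_lipschitz:
  fixes f :: "real \<Rightarrow> real"
  assumes loc: "\<forall>x. \<exists>U. open U \<and> x \<in> U \<and> (\<exists>L. \<forall>y\<in>U. \<forall>z\<in>U. \<bar>f y - f z\<bar> \<le> L * \<bar>y - z\<bar>)"
  obtains L where "L-lipschitz_on {a..b} f"
proof -
  have "local_lipschitz {0::real} {a..b} (\<lambda>_. f)"
  proof (rule local_lipschitzI)
    fix t x assume "t \<in> {0::real}" "x \<in> {a..b}"
    obtain U L where U: "open U" "x \<in> U" and L: "\<forall>y\<in>U. \<forall>z\<in>U. \<bar>f y - f z\<bar> \<le> L * \<bar>y - z\<bar>"
      using loc by meson
    obtain e where "e > 0" and e: "cball x e \<subseteq> U"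
      using open_contains_cball_eq[OF U(1)] U(2) by blast
    have "(max L 0)-lipschitz_on (cball x e \<inter> {a..b}) f"
    proof (rule lipschitz_onI)
      fix y z assume "y \<in> cball x e \<inter> {a..b}" "z \<in> cball x e \<inter> {a..b}"
      then have "y \<in> U" "z \<in> U"
        using e by auto
      then have "\<bar>f y - f z\<bar> \<le> L * \<bar>y - z\<bar>"
        using L by simp
      also have "\<dots> \<le> max L 0 * \<bar>y - z\<bar>"
        by (intro mult_right_mono) auto
      finally show "dist (f y) (f z) \<le> max L 0 * dist y z"
        by (simp add: dist_real_def)
    qed simp
    then show "\<exists>u>0. \<exists>L. \<forall>t\<in>cball t u \<inter> {0}. L-lipschitz_on (cball x u \<inter> {a..b}) f"
      using \<open>e > 0\<close> by (intro exI[of _ e]) auto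
  qed
  then obtain L where "\<And>t. t \<in> {0::real} \<Longrightarrow> L-lipschitz_on {a..b} f"
    by (rule local_lipschitz_compact_implies_lipschitz) auto
  then show ?thesis
    using that by blast
qed

lemma growth_bound_while_positive:
  fixes g g' :: "real \<Rightarrow> real"
  assumes "a \<le> t" and "0 \<le> D" and "g a \<le> 0"
    and cont: "continuous_on {a..t} g"
    and deriv: "\<And>x. a < x \<Longrightarrow> x < t \<Longrightarrow> (g has_real_derivative g' x) (at x)"
    and slope: "\<And>x. a < x \<Longrightarrow> x < t \<Longrightarrow> 0 < g x \<Longrightarrow> g' x \<le> D"
  shows "g t \<le> D * (t - a)"
proof (cases "g t \<le> 0")
  case True
  moreover have "0 \<le> D * (t - a)"
    using assms(1,2) by simp
  ultimately show ?thesis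
    by linarith
next
  case False
  define S where "S = {a..t} \<inter> g -` {..0}"
  define s where "s = Sup S"
  have "a \<in> S" and "bdd_above S"
    using assms unfolding S_def by auto
  moreover have "closed S"
    unfolding S_def by (rule continuous_closed_preimage[OF cont]) auto
  ultimately have "s \<in> S" and "a \<le> s"
    unfolding s_def using closed_contains_Sup cSup_upper by blast+
  then have "g s \<le> 0" and "s \<le> t"
    unfolding S_def by auto
  then have "s < t"
    using False by (cases "s = t") auto
  have pos: "0 < g x" if "s < x" "x \<le> t" for x
  proof (rule ccontr)
    assume "\<not> 0 < g x"
    then have "x \<in> S"
      using that \<open>a \<le> s\<close> unfolding S_def by auto
    then show False
      using that cSup_upper[OF _ \<open>bdd_above S\<close>] unfolding s_def by fastforce
  qed
  obtain z where z: "s < z" "z < t" and mvt: "g t - g s = g' z * (t - s)"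
  proof (rule mvt[OF \<open>s < t\<close>, of g "\<lambda>x. (*) (g' x)"])
    show "continuous_on {s..t} g"
      using cont by (rule continuous_on_subset) (use \<open>a \<le> s\<close> in auto)
    show "(g has_derivative (*) (g' x)) (at x)" if "s < x" "x < t" for x
      using deriv[of x] that \<open>a \<le> s\<close> by (simp add: has_field_derivative_def)
  qed
  have "g' z \<le> D"
    using slope pos z \<open>a \<le> s\<close> by auto
  then have "g' z * (t - s) \<le> D * (t - s)"
    using \<open>s < t\<close> by (intro mult_right_mono) auto
  then have "g t \<le> D * (t - s)"
    using mvt \<open>g s \<le> 0\<close> by linarith
  also have "\<dots> \<le> D * (t - a)"
    using \<open>a \<le> s\<close> \<open>0 \<le> D\<close> by (intro mult_left_mono) auto
  finally show ?thesis .
qed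

lemma cooperative_system_nonneg_step:
  fixes w w' :: "'i \<Rightarrow> real \<Rightarrow> real"
  assumes "0 \<le> a" "a \<le> t" "t \<le> T" "0 \<le> K" "K * (t - a) \<le> 1 / 2"
    and cont: "\<And>i. continuous_on {0..T} (w i)"
    and deriv: "\<And>i s. 0 < s \<Longrightarrow> s < T \<Longrightarrow> (w i has_real_derivative w' i s) (at s)"
    and lower: "\<And>i s. s \<in> {0..T} \<Longrightarrow> -B \<le> w i s"
    and coop: "\<And>i s m. 0 < s \<Longrightarrow> s < T \<Longrightarrow> (\<And>k. -m \<le> w k s) \<Longrightarrow> w i s < 0
                 \<Longrightarrow> -K * m \<le> w' i s"
    and start: "\<And>i. 0 \<le> w i a"
  shows "0 \<le> w i t"
proof -
  \<comment> \<open>M is the largest negative part on [a, t]; a gap falls at rate at most K M, so M \<le> M/2.\<close>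
  define X where "X = insert 0 {- w k s | k s. s \<in> {a..t}}"
  define M where "M = Sup X"
  have "- w k s \<le> B" if "s \<in> {a..t}" for k s
    using lower[of s k] that assms(1,3) by auto
  then have "bdd_above X"
    unfolding X_def by (auto intro!: bdd_aboveI[of _ "max 0 B"] simp: le_max_iff_disj)
  then have upper: "x \<le> M" if "x \<in> X" for x
    using that unfolding M_def by (simp add: cSup_upper)
  have "0 \<le> M"
    using upper unfolding X_def by simp
  have below: "-M \<le> w k s" if "s \<in> {a..t}" for k s
  proof -
    have "- w k s \<in> X"
      using that unfolding X_def by blast
    then show ?thesis
      using upper by force
  qed
  have half: "- w k s \<le> M / 2" if "s \<in> {a..t}" for k s
  proof -
    have "(\<lambda>x. - w k x) s \<le> (K * M) * (s - a)"
    proof (rule growth_bound_while_positive[where g' = "\<lambda>x. - w' k x"])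
      show "continuous_on {a..s} (\<lambda>x. - w k x)"
        using that assms(1,3) by (intro continuous_intros continuous_on_subset[OF cont]) auto
      show "((\<lambda>x. - w k x) has_real_derivative - w' k x) (at x)" if "a < x" "x < s" for x
        using that \<open>s \<in> {a..t}\<close> assms(1,3) by (intro DERIV_minus deriv) auto
      show "- w' k x \<le> K * M" if "a < x" "x < s" "0 < - w k x" for x
        using coop[of x M k] below[of x] that \<open>s \<in> {a..t}\<close> assms(1,3) by fastforce
    qed (use that start \<open>0 \<le> K\<close> \<open>0 \<le> M\<close> in auto)
    also have "\<dots> = (K * (s - a)) * M"
      by simp
    also have "\<dots> \<le> (1 / 2) * M"
    proof (rule mult_right_mono[OF _ \<open>0 \<le> M\<close>])
      have "K * (s - a) \<le> K * (t - a)"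
        using that \<open>0 \<le> K\<close> by (intro mult_left_mono) auto
      then show "K * (s - a) \<le> 1 / 2"
        using assms(5) by linarith
    qed
    finally show ?thesis
      by simp
  qed
  have "Sup X \<le> M / 2"
    unfolding X_def using half \<open>0 \<le> M\<close> by (intro cSup_least) auto
  then have "M \<le> 0"
    unfolding M_def by simp
  then show ?thesis
    using below[of t i] assms(2) by simp
qed

lemma cooperative_system_nonneg:
  fixes w w' :: "'i \<Rightarrow> real \<Rightarrow> real"
  assumes "0 \<le> t" "t \<le> T" "0 < K"
    and cont: "\<And>i. continuous_on {0..T} (w i)"
    and deriv: "\<And>i s. 0 < s \<Longrightarrow> s < T \<Longrightarrow> (w i has_real_derivative w' i s) (at s)"
    and lower: "\<And>i s. s \<in> {0..T} \<Longrightarrow> -B \<le> w i s"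
    and coop: "\<And>i s m. 0 < s \<Longrightarrow> s < T \<Longrightarrow> (\<And>k. -m \<le> w k s) \<Longrightarrow> w i s < 0
                 \<Longrightarrow> -K * m \<le> w' i s"
    and init: "\<And>i. 0 \<le> w i 0"
  shows "0 \<le> w i t"
proof -
  define h where "h = 1 / (2 * K)"
  have "0 < h" and "K * h = 1 / 2"
    using \<open>0 < K\<close> unfolding h_def by auto
  have "\<forall>i. 0 \<le> w i s" if "0 \<le> s" "s \<le> T" "s \<le> real n * h" for n s
    using that
  proof (induction n arbitrary: s)
    case 0
    then show ?case
      using init by simp
  next
    case (Suc n)
    show ?case
    proof (cases "s \<le> real n * h")
      case True
      then show ?thesis
        using Suc by blast
    next
      case False
      let ?a = "real n * h"
      have a: "0 \<le> ?a" "?a \<le> s"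
        using False \<open>0 < h\<close> by auto
      have small: "K * (s - ?a) \<le> 1 / 2"
      proof -
        have "K * (s - ?a) \<le> K * h"
          using Suc.prems(3) \<open>0 < K\<close> by (intro mult_left_mono) (auto simp: algebra_simps)
        then show ?thesis
          using \<open>K * h = 1 / 2\<close> by simp
      qed
      have start: "0 \<le> w i ?a" for i
        using Suc.IH a Suc.prems(2) by simp
      show ?thesis
      proof
        fix i
        show "0 \<le> w i s"
          by (rule cooperative_system_nonneg_step[where w = w and w' = w' and B = B,
                OF a Suc.prems(2) _ small cont deriv lower coop start])
            (use \<open>0 < K\<close> in auto)
      qed
    qed
  qed
  moreover obtain n :: nat where "t / h \<le> real n"
    using real_arch_simple by blast
  then have "t \<le> real n * h"
    using \<open>0 < h\<close> by (simp add: field_simps)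
  ultimately show ?thesis
    using assms(1,2) by blast
qed

lemma pos_if_deriv_ge_linear:
  fixes g g' :: "real \<Rightarrow> real"
  assumes "0 < T" "0 \<le> g 0"
    and cont: "continuous_on {0..T} g"
    and deriv: "\<And>x. 0 < x \<Longrightarrow> x < T \<Longrightarrow> (g has_real_derivative g' x) (at x)"
    and ge: "\<And>x. 0 < x \<Longrightarrow> x < T \<Longrightarrow> - K * g x \<le> g' x"
    and strict: "0 < g 0 \<or> (\<forall>x. 0 < x \<longrightarrow> x < T \<longrightarrow> - K * g x < g' x)"
  shows "0 < g T"
proof -
  define \<phi> where "\<phi> x = exp (K * x) * g x" for x
  obtain z where z: "0 < z" "z < T"
    and mvt: "\<phi> T - \<phi> 0 = exp (K * z) * (g' z + K * g z) * (T - 0)"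
  proof (rule mvt[OF \<open>0 < T\<close>, of \<phi> "\<lambda>x. (*) (exp (K * x) * (g' x + K * g x))"])
    show "continuous_on {0..T} \<phi>"
      unfolding \<phi>_def by (intro continuous_intros cont)
    show "(\<phi> has_derivative (*) (exp (K * x) * (g' x + K * g x))) (at x)" if "0 < x" "x < T" for x
      unfolding \<phi>_def has_field_derivative_def[symmetric]
      by (rule derivative_eq_intros refl deriv[OF that] | simp add: algebra_simps)+
  qed
  have "0 < \<phi> T"
  proof (cases "0 < g 0")
    case True
    have "0 \<le> exp (K * z) * (g' z + K * g z) * T"
      using ge[OF z] \<open>0 < T\<close> by simp
    then show ?thesis
      using mvt True unfolding \<phi>_def by simp
  next
    case False
    then have "0 < g' z + K * g z"
      using strict z by auto
    then have "0 < exp (K * z) * (g' z + K * g z) * T"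
      using \<open>0 < T\<close> by simp
    then show ?thesis
      using mvt \<open>0 \<le> g 0\<close> unfolding \<phi>_def by simp
  qed
  then show ?thesis
    unfolding \<phi>_def by (simp add: zero_less_mult_iff)
qed

lemma C1_halfline_continuous_on:
  assumes "C1_halfline u u'"
  shows "continuous_on {0..} u"
  using assms unfolding C1_halfline_def by (intro DERIV_continuous_on) auto

lemma C1_halfline_has_real_derivative_at:
  assumes "C1_halfline u u'" and "0 < t"
  shows "(u has_real_derivative u' t) (at t)"
proof -
  have "at t within {0..} = at t"
    using \<open>0 < t\<close> by (intro at_within_interior) auto
  then show ?thesis
    using assms unfolding C1_halfline_def by (metis less_imp_le)
qed

lemma locally_bounded_in_timeE:
  assumes "locally_bounded_in_time V P" and "0 < T"
  obtains B where "\<And>j t. t \<in> {0..T} \<Longrightarrow> \<bar>V j t\<bar> \<le> B \<and> \<bar>P j t\<bar> \<le> B"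
proof -
  obtain B where B: "\<forall>t\<in>{0..T}. \<forall>j. \<bar>V j t\<bar> + \<bar>P j t\<bar> \<le> B"
    using assms unfolding locally_bounded_in_time_def by blast
  show ?thesis
  proof (rule that)
    fix j t assume "t \<in> {0..T}"
    then have "\<bar>V j t\<bar> + \<bar>P j t\<bar> \<le> B"
      using B by blast
    then show "\<bar>V j t\<bar> \<le> B \<and> \<bar>P j t\<bar> \<le> B"
      using abs_ge_zero[of "V j t"] abs_ge_zero[of "P j t"] by linarith
  qed
qed

locale sub_super_pair =
  fixes \<alpha> \<beta> :: real and f :: "real \<Rightarrow> real"
    and Vl Pl Vu Pu Vl' Pl' Vu' Pu' :: "int \<Rightarrow> real \<Rightarrow> real"
  assumes \<alpha>_pos: "0 < \<alpha>" and \<beta>_pos: "0 < \<beta>"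
    and f_locally_lipschitz:
      "\<forall>x. \<exists>U. open U \<and> x \<in> U \<and> (\<exists>L. \<forall>y\<in>U. \<forall>z\<in>U. \<bar>f y - f z\<bar> \<le> L * \<bar>y - z\<bar>)"
    and C1_Vl: "\<And>j. C1_halfline (Vl j) (Vl' j)" and C1_Pl: "\<And>j. C1_halfline (Pl j) (Pl' j)"
    and C1_Vu: "\<And>j. C1_halfline (Vu j) (Vu' j)" and C1_Pu: "\<And>j. C1_halfline (Pu j) (Pu' j)"
    and sub: "\<And>t j. 0 < t \<Longrightarrow> Vl' j t \<le> -2*\<alpha>*Vl j t + \<beta>*(Pl j t + Pl (j+1) t)
               \<and> Pl' j t \<le> f (Pl j t) + \<alpha>*(Vl j t + Vl (j-1) t) - 2*\<beta>*Pl j t"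
    and super: "\<And>t j. 0 < t \<Longrightarrow> Vu' j t \<ge> -2*\<alpha>*Vu j t + \<beta>*(Pu j t + Pu (j+1) t)
               \<and> Pu' j t \<ge> f (Pu j t) + \<alpha>*(Vu j t + Vu (j-1) t) - 2*\<beta>*Pu j t"
    and bounded_sub: "locally_bounded_in_time Vl Pl"
    and bounded_super: "locally_bounded_in_time Vu Pu"
    and initial_le: "\<And>j. Vl j 0 \<le> Vu j 0 \<and> Pl j 0 \<le> Pu j 0"
begin

definition dV :: "int \<Rightarrow> real \<Rightarrow> real" where
  "dV j t = Vu j t - Vl j t"

definition dP :: "int \<Rightarrow> real \<Rightarrow> real" where
  "dP j t = Pu j t - Pl j t"

lemma continuous_on_dV: "continuous_on {0..} (dV j)"
  unfolding dV_def[abs_def]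
  using C1_halfline_continuous_on[OF C1_Vu] C1_halfline_continuous_on[OF C1_Vl]
  by (rule continuous_on_diff)

lemma continuous_on_dP: "continuous_on {0..} (dP j)"
  unfolding dP_def[abs_def]
  using C1_halfline_continuous_on[OF C1_Pu] C1_halfline_continuous_on[OF C1_Pl]
  by (rule continuous_on_diff)

lemma has_real_derivative_dV:
  assumes "0 < t"
  shows "(dV j has_real_derivative Vu' j t - Vl' j t) (at t)"
  unfolding dV_def[abs_def]
  using C1_halfline_has_real_derivative_at[OF C1_Vu assms] C1_halfline_has_real_derivative_at[OF C1_Vl assms]
  by (rule DERIV_diff)

lemma has_real_derivative_dP:
  assumes "0 < t"
  shows "(dP j has_real_derivative Pu' j t - Pl' j t) (at t)"
  unfolding dP_def[abs_def]
  using C1_halfline_has_real_derivative_at[OF C1_Pu assms] C1_halfline_has_real_derivative_at[OF C1_Pl assms]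
  by (rule DERIV_diff)

lemma dV_deriv_ge:
  "0 < t \<Longrightarrow> -2*\<alpha>*dV j t + \<beta>*(dP j t + dP (j+1) t) \<le> Vu' j t - Vl' j t"
  using sub[of t j] super[of t j] unfolding dV_def dP_def by (simp add: algebra_simps)

lemma dP_deriv_ge:
  "0 < t \<Longrightarrow> f (Pu j t) - f (Pl j t) + \<alpha>*(dV j t + dV (j-1) t) - 2*\<beta>*dP j t \<le> Pu' j t - Pl' j t"
  using sub[of t j] super[of t j] unfolding dV_def dP_def by (simp add: algebra_simps)

lemma sub_super_bounded:
  assumes "0 < T"
  obtains B where
    "\<And>j t. t \<in> {0..T} \<Longrightarrow> \<bar>Vl j t\<bar> \<le> B \<and> \<bar>Pl j t\<bar> \<le> B \<and> \<bar>Vu j t\<bar> \<le> B \<and> \<bar>Pu j t\<bar> \<le> B"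
proof -
  obtain B1 where "\<And>j t. t \<in> {0..T} \<Longrightarrow> \<bar>Vl j t\<bar> \<le> B1 \<and> \<bar>Pl j t\<bar> \<le> B1"
    using locally_bounded_in_timeE[OF bounded_sub assms] by blast
  moreover obtain B2 where "\<And>j t. t \<in> {0..T} \<Longrightarrow> \<bar>Vu j t\<bar> \<le> B2 \<and> \<bar>Pu j t\<bar> \<le> B2"
    using locally_bounded_in_timeE[OF bounded_super assms] by blast
  ultimately show ?thesis
    using that[of "max B1 B2"] by (meson max.coboundedI1 max.coboundedI2)
qed

lemma differences_bounded:
  assumes "0 < T"
  obtains B where "\<And>j t. t \<in> {0..T} \<Longrightarrow> \<bar>dV j t\<bar> \<le> B \<and> \<bar>dP j t\<bar> \<le> B"
proof -
  obtain B where B: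
    "\<And>j t. t \<in> {0..T} \<Longrightarrow> \<bar>Vl j t\<bar> \<le> B \<and> \<bar>Pl j t\<bar> \<le> B \<and> \<bar>Vu j t\<bar> \<le> B \<and> \<bar>Pu j t\<bar> \<le> B"
    using sub_super_bounded[OF assms] by blast
  show ?thesis
  proof (rule that)
    fix j t assume "t \<in> {0..T}"
    from B[OF this, of j] show "\<bar>dV j t\<bar> \<le> 2 * B \<and> \<bar>dP j t\<bar> \<le> 2 * B"
      unfolding dV_def dP_def by (simp add: abs_le_iff)
  qed
qed

lemma reaction_difference_le:
  assumes "0 < T"
  obtains L where "0 \<le> L"
    and "\<And>j t. t \<in> {0..T} \<Longrightarrow> \<bar>f (Pu j t) - f (Pl j t)\<bar> \<le> L * \<bar>dP j t\<bar>"
proof -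
  obtain B where B:
    "\<And>j t. t \<in> {0..T} \<Longrightarrow> \<bar>Vl j t\<bar> \<le> B \<and> \<bar>Pl j t\<bar> \<le> B \<and> \<bar>Vu j t\<bar> \<le> B \<and> \<bar>Pu j t\<bar> \<le> B"
    using sub_super_bounded[OF assms] by blast
  obtain L where L: "L-lipschitz_on {-B..B} f"
    using lipschitz_on_interval_if_locally_lipschitz[OF f_locally_lipschitz] .
  have "\<bar>f (Pu j t) - f (Pl j t)\<bar> \<le> L * \<bar>dP j t\<bar>" if "t \<in> {0..T}" for j t
  proof -
    have "Pu j t \<in> {-B..B}" "Pl j t \<in> {-B..B}"
      using B[OF that, of j] by auto
    from lipschitz_onD[OF L this] show ?thesis
      unfolding dP_def dist_real_def .
  qed
  then show ?thesis
    using that lipschitz_on_nonneg[OF L] by blast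
qed

lemma dV_deriv_ge_if_neg:
  assumes "0 < t" "dV j t < 0" "-m \<le> dP j t" "-m \<le> dP (j+1) t"
  shows "-(2*\<beta>)*m \<le> Vu' j t - Vl' j t"
proof -
  have "0 \<le> -2*\<alpha>*dV j t"
    using \<alpha>_pos assms(2) by (simp add: mult_le_0_iff)
  moreover have "-(2*\<beta>)*m = \<beta>*(-m + -m)"
    by simp
  moreover have "\<dots> \<le> \<beta>*(dP j t + dP (j+1) t)"
    using \<beta>_pos assms(3,4) by (intro mult_left_mono) auto
  ultimately show ?thesis
    using dV_deriv_ge[OF assms(1), of j] by linarith
qed

lemma dP_deriv_ge_if_neg:
  assumes "0 < t" "dP j t < 0" "-m \<le> dP j t" "-m \<le> dV j t" "-m \<le> dV (j-1) t"
    and "0 \<le> L" and "\<bar>f (Pu j t) - f (Pl j t)\<bar> \<le> L * \<bar>dP j t\<bar>"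
  shows "-(L + 2*\<alpha>)*m \<le> Pu' j t - Pl' j t"
proof -
  have "L * \<bar>dP j t\<bar> \<le> L * m"
    using assms(2,3,6) by (intro mult_left_mono) auto
  moreover have "-(L + 2*\<alpha>)*m = -(L*m) + \<alpha>*(-m + -m)"
    by (simp add: algebra_simps)
  moreover have "\<alpha>*(-m + -m) \<le> \<alpha>*(dV j t + dV (j-1) t)"
    using \<alpha>_pos assms(4,5) by (intro mult_left_mono) auto
  moreover have "0 \<le> -2*\<beta>*dP j t"
    using \<beta>_pos assms(2) by (simp add: mult_le_0_iff)
  ultimately show ?thesis
    using dP_deriv_ge[OF assms(1), of j] assms(7) by (simp add: abs_le_iff)
qed

lemma weak_comparison:
  assumes "0 \<le> t"
  shows "0 \<le> dV j t \<and> 0 \<le> dP j t"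
proof -
  define T where "T = t + 1"
  have "0 < T"
    using assms unfolding T_def by simp
  obtain L where "0 \<le> L" and L: "\<And>j s. s \<in> {0..T} \<Longrightarrow> \<bar>f (Pu j s) - f (Pl j s)\<bar> \<le> L * \<bar>dP j s\<bar>"
    using reaction_difference_le[OF \<open>0 < T\<close>] by blast
  obtain B where B: "\<And>j s. s \<in> {0..T} \<Longrightarrow> \<bar>dV j s\<bar> \<le> B \<and> \<bar>dP j s\<bar> \<le> B"
    using differences_bounded[OF \<open>0 < T\<close>] by blast
  define K where "K = L + 2*\<alpha> + 2*\<beta>"
  define w where "w = case_sum dV dP"
  define w' where "w' = case_sum (\<lambda>j s. Vu' j s - Vl' j s) (\<lambda>j s. Pu' j s - Pl' j s)"
  have "0 \<le> w i t" for i
  proof (rule cooperative_system_nonneg[where w = w and w' = w' and K = K and B = B and T = T])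
    show "0 \<le> t" "t \<le> T" "0 < K"
      using assms \<alpha>_pos \<beta>_pos \<open>0 \<le> L\<close> unfolding T_def K_def by auto
    show "continuous_on {0..T} (w i)" for i
      unfolding w_def
      by (cases i) (auto intro: continuous_on_subset[OF continuous_on_dV] continuous_on_subset[OF continuous_on_dP])
    show "(w i has_real_derivative w' i s) (at s)" if "0 < s" for i s
      unfolding w_def w'_def using that
      by (cases i) (auto intro: has_real_derivative_dV has_real_derivative_dP)
    show "-B \<le> w i s" if "s \<in> {0..T}" for i s
    proof -
      have "-B \<le> dV j s \<and> -B \<le> dP j s" for j
        using B[OF that, of j] by (simp add: abs_le_iff)
      then show ?thesis
        unfolding w_def by (cases i) auto
    qed
    show "0 \<le> w i 0" for i
      unfolding w_def dV_def dP_def using initial_le by (cases i) auto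
    show "-K * m \<le> w' i s" if "0 < s" "s < T" and lower: "\<And>k. -m \<le> w k s" and "w i s < 0" for i s m
    proof -
      have "0 \<le> m"
        using lower[of i] \<open>w i s < 0\<close> by linarith
      show ?thesis
      proof (cases i)
        case (Inl j)
        have "-(2*\<beta>)*m \<le> w' i s"
          using dV_deriv_ge_if_neg[OF \<open>0 < s\<close>] lower[of "Inr j"] lower[of "Inr (j+1)"] \<open>w i s < 0\<close>
          unfolding w_def w'_def Inl by simp
        moreover have "(2*\<beta>)*m \<le> K*m"
          using \<open>0 \<le> m\<close> \<open>0 \<le> L\<close> \<alpha>_pos unfolding K_def by (intro mult_right_mono) auto
        ultimately show ?thesis
          by linarith
      next
        case (Inr j)
        have "-(L + 2*\<alpha>)*m \<le> w' i s"
          using dP_deriv_ge_if_neg[OF \<open>0 < s\<close> _ _ _ _ \<open>0 \<le> L\<close> L] that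
            lower[of i] lower[of "Inl j"] lower[of "Inl (j-1)"]
          unfolding w_def w'_def Inr by simp
        moreover have "(L + 2*\<alpha>)*m \<le> K*m"
          using \<open>0 \<le> m\<close> \<beta>_pos unfolding K_def by (intro mult_right_mono) auto
        ultimately show ?thesis
          by linarith
      qed
    qed
  qed
  from this[of "Inl j"] this[of "Inr j"] show ?thesis
    unfolding w_def by simp
qed

lemma dV_pos:
  assumes "0 < t" and "0 < dV j 0 \<or> (\<forall>s>0. 0 < dP j s) \<or> (\<forall>s>0. 0 < dP (j+1) s)"
  shows "0 < dV j t"
proof (rule pos_if_deriv_ge_linear[where g = "dV j" and T = t and K = "2*\<alpha>" and g' = "\<lambda>s. Vu' j s - Vl' j s"])
  show "0 < t" "0 \<le> dV j 0"
    using assms(1) weak_comparison by auto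
  show "continuous_on {0..t} (dV j)"
    by (rule continuous_on_subset[OF continuous_on_dV]) auto
  show "(dV j has_real_derivative Vu' j s - Vl' j s) (at s)" if "0 < s" for s
    using that by (rule has_real_derivative_dV)
  have source: "-(2*\<alpha>)*dV j s + \<beta>*(dP j s + dP (j+1) s) \<le> Vu' j s - Vl' j s"
    and "0 \<le> dP j s + dP (j+1) s" if "0 < s" for s
    using dV_deriv_ge[OF that] weak_comparison that by auto
  then show "-(2*\<alpha>)*dV j s \<le> Vu' j s - Vl' j s" if "0 < s" for s
    using mult_nonneg_nonneg[OF less_imp_le[OF \<beta>_pos], of "dP j s + dP (j+1) s"] that by fastforce
  have "0 < dP j s + dP (j+1) s" if "\<not> 0 < dV j 0" "0 < s" for s
    using assms(2) that weak_comparison[of s j] weak_comparison[of s "j+1"] by force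
  then show "0 < dV j 0 \<or> (\<forall>s. 0 < s \<longrightarrow> s < t \<longrightarrow> -(2*\<alpha>)*dV j s < Vu' j s - Vl' j s)"
    using source mult_pos_pos[OF \<beta>_pos] by fastforce
qed

lemma dP_pos:
  assumes "0 < t" and "0 < dP j 0 \<or> (\<forall>s>0. 0 < dV j s) \<or> (\<forall>s>0. 0 < dV (j-1) s)"
  shows "0 < dP j t"
proof -
  obtain L where "0 \<le> L" and L: "\<And>j s. s \<in> {0..t} \<Longrightarrow> \<bar>f (Pu j s) - f (Pl j s)\<bar> \<le> L * \<bar>dP j s\<bar>"
    using reaction_difference_le[OF \<open>0 < t\<close>] by blast
  show ?thesis
  proof (rule pos_if_deriv_ge_linear[where g = "dP j" and T = t and K = "L + 2*\<beta>" and g' = "\<lambda>s. Pu' j s - Pl' j s"])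
    show "0 < t" "0 \<le> dP j 0"
      using assms(1) weak_comparison by auto
    show "continuous_on {0..t} (dP j)"
      by (rule continuous_on_subset[OF continuous_on_dP]) auto
    show "(dP j has_real_derivative Pu' j s - Pl' j s) (at s)" if "0 < s" for s
      using that by (rule has_real_derivative_dP)
    have source: "-(L + 2*\<beta>)*dP j s + \<alpha>*(dV j s + dV (j-1) s) \<le> Pu' j s - Pl' j s"
      and "0 \<le> dV j s + dV (j-1) s" if "0 < s" "s < t" for s
    proof -
      have "0 \<le> dP j s"
        using weak_comparison that by simp
      then have "-(L * dP j s) \<le> f (Pu j s) - f (Pl j s)"
        using L[of s j] that by (simp add: abs_le_iff)
      then show "-(L + 2*\<beta>)*dP j s + \<alpha>*(dV j s + dV (j-1) s) \<le> Pu' j s - Pl' j s"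
        using dP_deriv_ge[OF that(1), of j] by (simp add: algebra_simps)
      show "0 \<le> dV j s + dV (j-1) s"
        using weak_comparison that by (simp add: add_nonneg_nonneg)
    qed
    then show "-(L + 2*\<beta>)*dP j s \<le> Pu' j s - Pl' j s" if "0 < s" "s < t" for s
      using mult_nonneg_nonneg[OF less_imp_le[OF \<alpha>_pos], of "dV j s + dV (j-1) s"] that by fastforce
    have "0 < dV j s + dV (j-1) s" if "\<not> 0 < dP j 0" "0 < s" for s
      using assms(2) that weak_comparison[of s j] weak_comparison[of s "j-1"] by force
    then show "0 < dP j 0 \<or> (\<forall>s. 0 < s \<longrightarrow> s < t \<longrightarrow> -(L + 2*\<beta>)*dP j s < Pu' j s - Pl' j s)"
      using source mult_pos_pos[OF \<alpha>_pos] by fastforce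
  qed
qed

lemma strict_comparison:
  assumes "dV j\<^sub>0 0 \<noteq> 0 \<or> dP j\<^sub>0 0 \<noteq> 0" and "0 < t"
  shows "0 < dV j t \<and> 0 < dP j t"
proof -
  define pos_dV where "pos_dV j \<longleftrightarrow> (\<forall>s>0. 0 < dV j s)" for j
  have pos_dP: "\<forall>s>0. 0 < dP j s" "\<forall>s>0. 0 < dP (j+1) s" if "pos_dV j" for j
    using that dP_pos[of _ j] dP_pos[of _ "j+1"] unfolding pos_dV_def by auto
  have up: "pos_dV (j+1)" if "pos_dV j" for j
    using dV_pos[of _ "j+1"] pos_dP(2)[OF that] unfolding pos_dV_def by auto
  have down: "pos_dV j" if "pos_dV (j+1)" for j
    using dV_pos[of _ j] pos_dP(1)[OF that] unfolding pos_dV_def by auto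
  have "0 \<le> dV j\<^sub>0 0" "0 \<le> dP j\<^sub>0 0"
    using weak_comparison by auto
  then have "0 < dV j\<^sub>0 0 \<or> (\<forall>s>0. 0 < dP j\<^sub>0 s)"
    using assms(1) dP_pos by force
  then have "pos_dV j\<^sub>0"
    using dV_pos unfolding pos_dV_def by blast
  then have "pos_dV j" for j
    by (induction j rule: int_induct[where k = j\<^sub>0]) (use up down in \<open>auto simp: algebra_simps\<close>)
  then show ?thesis
    using pos_dP(1) assms(2) unfolding pos_dV_def by blast
qed

end

lemma obtain_sub_super_pair:
  assumes "\<alpha> > 0" and "\<beta> > 0" and "KPP_reaction f"
    and "is_subsolution \<alpha> \<beta> f Vl Pl" and "is_supersolution \<alpha> \<beta> f Vu Pu"
    and "locally_bounded_in_time Vl Pl" and "locally_bounded_in_time Vu Pu"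
    and "\<forall>j. Vl j 0 \<le> Vu j 0 \<and> Pl j 0 \<le> Pu j 0"
  obtains Vl' Pl' Vu' Pu' where "sub_super_pair \<alpha> \<beta> f Vl Pl Vu Pu Vl' Pl' Vu' Pu'"
proof -
  obtain Vl' Pl' where
    C1_sub: "\<forall>j. C1_halfline (Vl j) (Vl' j) \<and> C1_halfline (Pl j) (Pl' j)" and
    sub: "\<forall>t>0. \<forall>j. Vl' j t \<le> -2*\<alpha>*Vl j t + \<beta>*(Pl j t + Pl (j+1) t)
            \<and> Pl' j t \<le> f (Pl j t) + \<alpha>*(Vl j t + Vl (j-1) t) - 2*\<beta>*Pl j t"
    using assms(4) unfolding is_subsolution_def by blast
  obtain Vu' Pu' where
    C1_super: "\<forall>j. C1_halfline (Vu j) (Vu' j) \<and> C1_halfline (Pu j) (Pu' j)" and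
    super: "\<forall>t>0. \<forall>j. Vu' j t \<ge> -2*\<alpha>*Vu j t + \<beta>*(Pu j t + Pu (j+1) t)
            \<and> Pu' j t \<ge> f (Pu j t) + \<alpha>*(Vu j t + Vu (j-1) t) - 2*\<beta>*Pu j t"
    using assms(5) unfolding is_supersolution_def by blast
  have "\<forall>x. \<exists>U. open U \<and> x \<in> U \<and> (\<exists>L. \<forall>y\<in>U. \<forall>z\<in>U. \<bar>f y - f z\<bar> \<le> L * \<bar>y - z\<bar>)"
    using assms(3) unfolding KPP_reaction_def by blast
  then have "sub_super_pair \<alpha> \<beta> f Vl Pl Vu Pu Vl' Pl' Vu' Pu'"
    using assms(1,2,6-8) C1_sub C1_super sub super by unfold_locales auto
  then show ?thesis
    by (rule that)
qed

theorem proposition6p2: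
  fixes \<alpha> \<beta> :: real and f :: "real \<Rightarrow> real"
    and Vl Pl Vu Pu :: "int \<Rightarrow> real \<Rightarrow> real"
  assumes "\<alpha> > 0" and "\<beta> > 0" and "KPP_reaction f"
    and "is_subsolution \<alpha> \<beta> f Vl Pl" and "is_supersolution \<alpha> \<beta> f Vu Pu"
    and "locally_bounded_in_time Vl Pl" and "locally_bounded_in_time Vu Pu"
    and "\<forall>j. Vl j 0 \<le> Vu j 0 \<and> Pl j 0 \<le> Pu j 0"
  shows "(\<forall>t>0. \<forall>j. Vl j t \<le> Vu j t \<and> Pl j t \<le> Pu j t)
     \<and> ((\<exists>j. Vl j 0 \<noteq> Vu j 0 \<or> Pl j 0 \<noteq> Pu j 0) \<longrightarrow>
          (\<forall>t>0. \<forall>j. Vl j t < Vu j t \<and> Pl j t < Pu j t))"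
proof -
  obtain Vl' Pl' Vu' Pu' where "sub_super_pair \<alpha> \<beta> f Vl Pl Vu Pu Vl' Pl' Vu' Pu'"
    using obtain_sub_super_pair[OF assms] .
  then interpret sub_super_pair \<alpha> \<beta> f Vl Pl Vu Pu Vl' Pl' Vu' Pu' .
  have "Vl j t \<le> Vu j t \<and> Pl j t \<le> Pu j t" if "0 < t" for j t
    using weak_comparison[of t j] that unfolding dV_def dP_def by simp
  moreover have "Vl j t < Vu j t \<and> Pl j t < Pu j t"
    if "Vl j\<^sub>0 0 \<noteq> Vu j\<^sub>0 0 \<or> Pl j\<^sub>0 0 \<noteq> Pu j\<^sub>0 0" and "0 < t" for j\<^sub>0 j t
    using strict_comparison[of j\<^sub>0 t j] that unfolding dV_def dP_def by auto
  ultimately show ?thesis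
    by blast
qed

end
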